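(* Let $\mu$ be a positive Borel measure on $\mathbb{R}$, absolutely continuous with respect to Lebesgue measure, with finite moments of all orders, supported on a set $E$ with infinitely many points, let $c\in\mathbb{R}\setminus E$, $N>0$, and assume $\mu$ is classical or semi-classical, so that its monic orthogonal polynomials satisfy $xP_n=P_{n+1}+\beta_nP_n+\gamma_nP_{n-1}$ and a structure relation $\sigma(x)P_n'(x)=a(x;n)P_n(x)+b(x;n)P_{n-1}(x)$ with polynomials $\sigma$, $a(x;n)$, $b(x;n)$ whose degrees do not depend on $n$. With $\Lambda_n^c$ as in the context, define $$B_2(x;n)=\Lambda_{n-1}^c\Big(\frac{1}{\Lambda_{n-1}^c}+\frac{x-\beta_{n-1}}{\gamma_{n-1}}\Big),\qquad \Delta(x;n)=B_2(x;n)+\frac{\Lambda_n^c\Lambda_{n-1}^c}{\gamma_{n-1}},$$ $$C_1(x;n)=\frac{1}{\sigma(x)}\Big(a(x;n)-\Lambda_n^c\frac{b(x;n-1)}{\gamma_{n-1}}\Big),\qquad D_1(x;n)=\frac{1}{\sigma(x)}\Big(b(x;n)+\Lambda_n^c\,b(x;n-1)\Big(\frac{a(x;n-1)}{b(x;n-1)}+\frac{x-\beta_{n-1}}{\gamma_{n-1}}\Big)\Big),$$ $$C_2(x;n)=\frac{-\Lambda_{n-1}^c}{\sigma(x)}\Big(\frac{a(x;n)}{\gamma_{n-1}}+\frac{b(x;n-1)}{\gamma_{n-1}}\Big(\frac{1}{\Lambda_{n-1}^c}+\frac{x-\beta_{n-1}}{\gamma_{n-1}}\Big)\Big),$$ $$D_2(x;n)=\frac{\Lambda_{n-1}^c}{\sigma(x)}\Big[\frac{\sigma(x)-b(x;n)}{\gamma_{n-1}}+b(x;n-1)\Big(\frac{a(x;n-1)}{b(x;n-1)}+\frac{x-\beta_{n-1}}{\gamma_{n-1}}\Big)\Big(\frac{1}{\Lambda_{n-1}^c}+\frac{x-\beta_{n-1}}{\gamma_{n-1}}\Big)\Big],$$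 and for $k=1,2$ $$\xi_k^c(x;n)=\frac{C_k(x;n)B_2(x;n)\gamma_{n-1}+D_k(x;n)\Lambda_{n-1}^c}{\Delta(x;n)\gamma_{n-1}},\qquad \eta_k^c(x;n)=\frac{D_k(x;n)-C_k(x;n)\Lambda_n^c}{\Delta(x;n)}.$$ Then $\deg\Delta(x;n)=1$, and the differential operators $\mathfrak a_n=-\xi_1^c(x;n)\mathrm I+\mathrm D_x$ and $\mathfrak a_n^\dagger=-\eta_2^c(x;n)\mathrm I+\mathrm D_x$ ($\mathrm I$ the identity, $\mathrm D_x$ the derivative) satisfy $$\mathfrak a_n[Q_n^{c,N}(x)]=\eta_1^c(x;n)\,Q_{n-1}^{c,N}(x),\qquad \mathfrak a_n^\dagger[Q_{n-1}^{c,N}(x)]=\xi_2^c(x;n)\,Q_n^{c,N}(x),$$ i.e. they are lowering and raising operators for $\{Q_n^{c,N}\}$.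
   Context: $\{P_n\}$ is the monic orthogonal polynomial sequence (MOPS) for $\mu$, $\|f\|_\mu^2=\int f^2d\mu$; $\{Q_n^c\}$ is the MOPS for $\langle f,g\rangle_\nu=\int fg\frac{1}{x-c}d\mu$; $\{Q_n^{c,N}\}$ is the MOPS for $\langle f,g\rangle_{\nu_N}=\int fg\frac{1}{x-c}d\mu+Nf(c)g(c)$. $\Lambda_n^c=\frac{\pi_{n-1}-r_{n-1}}{1+NB_n^c}-\pi_{n-1}$, where $\pi_{n-1}=P_n(c)/P_{n-1}(c)$, $r_{n-1}=F_n(c)/F_{n-1}(c)$ with $F_n(s)=\int\frac{P_n(x)}{x-s}d\mu(x)$, $F_{-1}=1$, and $B_n^c=\frac{-Q_n^c(c)P_{n-1}(c)}{\|P_{n-1}\|_\mu^2}$; it is the constant with $Q_n^{c,N}=P_n+\Lambda_n^cP_{n-1}$. The statement concerns indices $n$ for which all displayed quantities are defined. *)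

theory Defs
  imports "HOL-Analysis.Analysis" "HOL-Computational_Algebra.Polynomial"
begin

definition mu_support :: "real measure \<Rightarrow> real set" where
  "mu_support \<mu> = {x. \<forall>e>0. emeasure \<mu> (ball x e) > 0}"

definition ip_mu :: "real measure \<Rightarrow> real poly \<Rightarrow> real poly \<Rightarrow> real" where
  "ip_mu \<mu> f g = (LINT x|\<mu>. poly f x * poly g x)"

definition ip_nu :: "real measure \<Rightarrow> real \<Rightarrow> real poly \<Rightarrow> real poly \<Rightarrow> real" where
  "ip_nu \<mu> c f g = (LINT x|\<mu>. poly f x * poly g x * (1 / (x - c)))"

definition ip_nuN :: "real measure \<Rightarrow> real \<Rightarrow> real \<Rightarrow> real poly \<Rightarrow> real poly \<Rightarrow> real" where
  "ip_nuN \<mu> c N f g = ip_nu \<mu> c f g + N * poly f c * poly g c"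

definition is_MOPS :: "(real poly \<Rightarrow> real poly \<Rightarrow> real) \<Rightarrow> (nat \<Rightarrow> real poly) \<Rightarrow> bool" where
  "is_MOPS ip Q \<longleftrightarrow> (\<forall>m. degree (Q m) = m \<and> lead_coeff (Q m) = 1 \<and>
      (\<forall>k<m. ip (Q m) (monom 1 k) = 0) \<and> ip (Q m) (Q m) \<noteq> 0)"

definition Fn :: "real measure \<Rightarrow> (nat \<Rightarrow> real poly) \<Rightarrow> nat \<Rightarrow> real \<Rightarrow> real" where
  "Fn \<mu> P m s = (LINT x|\<mu>. poly (P m) x / (x - s))"

definition Bc :: "real measure \<Rightarrow> (nat \<Rightarrow> real poly) \<Rightarrow> (nat \<Rightarrow> real poly) \<Rightarrow> real \<Rightarrow> nat \<Rightarrow> real" where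
  "Bc \<mu> P Qc c m = - poly (Qc m) c * poly (P (m - 1)) c / ip_mu \<mu> (P (m - 1)) (P (m - 1))"

definition LambdaC :: "real measure \<Rightarrow> (nat \<Rightarrow> real poly) \<Rightarrow> (nat \<Rightarrow> real poly) \<Rightarrow> real \<Rightarrow> real \<Rightarrow> nat \<Rightarrow> real" where
  "LambdaC \<mu> P Qc c N m =
     (let pi = poly (P m) c / poly (P (m - 1)) c;
          r = Fn \<mu> P m c / Fn \<mu> P (m - 1) c
      in (pi - r) / (1 + N * Bc \<mu> P Qc c m) - pi)"

(* the coefficient functions of the theorem; L = Lambda^c, bet/gam recurrence coefficients,
   sig, a, b structure-relation polynomials *)
definition B2 :: "(nat \<Rightarrow> real) \<Rightarrow> (nat \<Rightarrow> real) \<Rightarrow> (nat \<Rightarrow> real) \<Rightarrow> nat \<Rightarrow> real \<Rightarrow> real" where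
  "B2 L bet gam n x = L (n - 1) * (1 / L (n - 1) + (x - bet (n - 1)) / gam (n - 1))"

definition Delta :: "(nat \<Rightarrow> real) \<Rightarrow> (nat \<Rightarrow> real) \<Rightarrow> (nat \<Rightarrow> real) \<Rightarrow> nat \<Rightarrow> real poly" where
  "Delta L bet gam n =
     smult (L (n - 1)) ([:1 / L (n - 1):] + smult (1 / gam (n - 1)) [:- bet (n - 1), 1:])
     + [:L n * L (n - 1) / gam (n - 1):]"

definition C1 :: "real poly \<Rightarrow> (nat \<Rightarrow> real poly) \<Rightarrow> (nat \<Rightarrow> real poly) \<Rightarrow> (nat \<Rightarrow> real) \<Rightarrow> (nat \<Rightarrow> real) \<Rightarrow> (nat \<Rightarrow> real) \<Rightarrow> nat \<Rightarrow> real \<Rightarrow> real" where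
  "C1 sig a b L bet gam n x =
     (1 / poly sig x) * (poly (a n) x - L n * poly (b (n - 1)) x / gam (n - 1))"

definition D1 :: "real poly \<Rightarrow> (nat \<Rightarrow> real poly) \<Rightarrow> (nat \<Rightarrow> real poly) \<Rightarrow> (nat \<Rightarrow> real) \<Rightarrow> (nat \<Rightarrow> real) \<Rightarrow> (nat \<Rightarrow> real) \<Rightarrow> nat \<Rightarrow> real \<Rightarrow> real" where
  "D1 sig a b L bet gam n x =
     (1 / poly sig x) * (poly (b n) x + L n * poly (b (n - 1)) x *
        (poly (a (n - 1)) x / poly (b (n - 1)) x + (x - bet (n - 1)) / gam (n - 1)))"

definition C2 :: "real poly \<Rightarrow> (nat \<Rightarrow> real poly) \<Rightarrow> (nat \<Rightarrow> real poly) \<Rightarrow> (nat \<Rightarrow> real) \<Rightarrow> (nat \<Rightarrow> real) \<Rightarrow> (nat \<Rightarrow> real) \<Rightarrow> nat \<Rightarrow> real \<Rightarrow> real" where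
  "C2 sig a b L bet gam n x =
     (- L (n - 1) / poly sig x) * (poly (a n) x / gam (n - 1) +
        poly (b (n - 1)) x / gam (n - 1) * (1 / L (n - 1) + (x - bet (n - 1)) / gam (n - 1)))"

definition D2 :: "real poly \<Rightarrow> (nat \<Rightarrow> real poly) \<Rightarrow> (nat \<Rightarrow> real poly) \<Rightarrow> (nat \<Rightarrow> real) \<Rightarrow> (nat \<Rightarrow> real) \<Rightarrow> (nat \<Rightarrow> real) \<Rightarrow> nat \<Rightarrow> real \<Rightarrow> real" where
  "D2 sig a b L bet gam n x =
     (L (n - 1) / poly sig x) *
       ((poly sig x - poly (b n) x) / gam (n - 1) +
        poly (b (n - 1)) x * (poly (a (n - 1)) x / poly (b (n - 1)) x + (x - bet (n - 1)) / gam (n - 1))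
          * (1 / L (n - 1) + (x - bet (n - 1)) / gam (n - 1)))"

definition xi_c :: "(real \<Rightarrow> real) \<Rightarrow> (real \<Rightarrow> real) \<Rightarrow> (nat \<Rightarrow> real) \<Rightarrow> (nat \<Rightarrow> real) \<Rightarrow> (nat \<Rightarrow> real) \<Rightarrow> nat \<Rightarrow> real \<Rightarrow> real" where
  "xi_c Ck Dk L bet gam n x =
     (Ck x * B2 L bet gam n x * gam (n - 1) + Dk x * L (n - 1)) / (poly (Delta L bet gam n) x * gam (n - 1))"

definition eta_c :: "(real \<Rightarrow> real) \<Rightarrow> (real \<Rightarrow> real) \<Rightarrow> (nat \<Rightarrow> real) \<Rightarrow> (nat \<Rightarrow> real) \<Rightarrow> (nat \<Rightarrow> real) \<Rightarrow> nat \<Rightarrow> real \<Rightarrow> real" where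
  "eta_c Ck Dk L bet gam n x = (Dk x - Ck x * L n) / poly (Delta L bet gam n) x"

end

theory Submission
  imports Defs
begin

text \<open>
  The polynomial \<open>P\<^sub>m + t P\<^sub>m\<^sub>-\<^sub>1\<close> is monic of degree \<open>m\<close> and \<open>\<mu>\<close>-orthogonal to all polynomials
  of degree \<open>< m - 1\<close>. Both \<open>\<nu>\<close> and \<open>\<nu>\<^sub>N\<close> pair \<open>f\<close> with \<open>(x - c) q\<close> exactly as \<open>\<mu>\<close> pairs \<open>f\<close> with \<open>q\<close>,
  so by synthetic division such a polynomial is the \<open>m\<close>-th monic orthogonal polynomial for \<open>\<nu>\<close>
  (resp. \<open>\<nu>\<^sub>N\<close>) as soon as it is orthogonal to \<open>1\<close>, which determines \<open>t\<close>. The Casorati identity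
  \<open>F\<^sub>m\<^sub>+\<^sub>1(c) P\<^sub>m(c) - F\<^sub>m(c) P\<^sub>m\<^sub>+\<^sub>1(c) = \<parallel>P\<^sub>m\<parallel>\<^sup>2\<close> evaluates \<open>Q\<^sub>m\<^sup>c(c)\<close>, hence \<open>B\<^sub>m\<^sup>c\<close>, and shows that
  the defining formula of \<open>\<Lambda>\<^sub>m\<^sup>c\<close> is precisely this \<open>t\<close> for \<open>\<nu>\<^sub>N\<close>: \<open>Q\<^sub>n\<^sup>c\<^sup>,\<^sup>N = P\<^sub>n + \<Lambda>\<^sub>n\<^sup>c P\<^sub>n\<^sub>-\<^sub>1\<close>.

  Eliminating \<open>P\<^sub>n\<^sub>-\<^sub>2\<close> with the three-term recurrence and differentiating with the structure
  relation writes \<open>Q\<^sub>n\<^sup>c\<^sup>,\<^sup>N\<close>, \<open>Q\<^sub>n\<^sub>-\<^sub>1\<^sup>c\<^sup>,\<^sup>N\<close> and their derivatives in the basis \<open>P\<^sub>n, P\<^sub>n\<^sub>-\<^sub>1\<close>; inverting the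
  change of basis, whose determinant is \<open>\<Delta>\<close>, gives the ladder relations.
\<close>

lemma degree_diff_less_or_eq:
  fixes p q :: "'a::comm_ring poly"
  assumes "degree p \<le> m" and "degree q \<le> m" and "coeff p m = coeff q m"
  shows "degree (p - q) < m \<or> p = q"
proof (cases "p = q")
  case False
  have "\<forall>k\<ge>m. coeff (p - q) k = 0"
    using assms by (auto simp: coeff_eq_0 le_less)
  then show ?thesis
    using False by (intro disjI1 degree_lessI) auto
qed simp

lemma
  assumes "is_MOPS ip Q"
  shows MOPS_degree: "degree (Q m) = m"
    and MOPS_lead_coeff: "lead_coeff (Q m) = 1"
    and MOPS_norm_nonzero: "ip (Q m) (Q m) \<noteq> 0"
  using assms unfolding is_MOPS_def by blast+

locale sym_bilinear_poly =
  fixes ip :: "real poly \<Rightarrow> real poly \<Rightarrow> real"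
  assumes add_left: "ip (p + q) r = ip p r + ip q r"
    and smult_left: "ip (smult a p) r = a * ip p r"
    and commute: "ip p q = ip q p"
begin

lemma add_right: "ip r (p + q) = ip r p + ip r q"
  by (metis add_left commute)

lemma smult_right: "ip r (smult a p) = a * ip r p"
  by (metis smult_left commute)

lemma zero_right [simp]: "ip r 0 = 0"
  using smult_right[of r 0 0] by simp

lemma diff_left: "ip (p - q) r = ip p r - ip q r"
  using add_left[of "p - q" q r] by simp

lemma sum_right: "ip r (sum g S) = (\<Sum>i\<in>S. ip r (g i))"
  by (induction S rule: infinite_finite_induct) (auto simp: add_right)

lemma orthogonal_if_orthogonal_monomials:
  assumes "\<forall>k<m. ip f (monom 1 k) = 0" and "degree q < m"
  shows "ip f q = 0"
proof -
  have "ip f q = ip f (\<Sum>i\<le>degree q. smult (coeff q i) (monom 1 i))"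
    by (simp add: smult_monom poly_as_sum_of_monoms)
  also have "\<dots> = (\<Sum>i\<le>degree q. coeff q i * ip f (monom 1 i))"
    by (simp add: sum_right smult_right)
  also have "\<dots> = 0"
    using assms by (intro sum.neutral) auto
  finally show ?thesis .
qed

lemma MOPS_orthogonal:
  assumes "is_MOPS ip Q" and "degree q < m"
  shows "ip (Q m) q = 0"
  using assms orthogonal_if_orthogonal_monomials unfolding is_MOPS_def by blast

lemma eq_0_if_orthogonal_below:
  assumes Q: "is_MOPS ip Q" and deg: "degree d < m"
    and orth: "\<And>q. degree q < m \<Longrightarrow> ip d q = 0"
  shows "d = 0"
proof (rule ccontr)
  assume "d \<noteq> 0"
  define j where "j = degree d"
  define e where "e = d - smult (lead_coeff d) (Q j)"
  note Qj = MOPS_degree[OF Q, of j] MOPS_lead_coeff[OF Q, of j] MOPS_norm_nonzero[OF Q, of j]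
  have "degree e < j \<or> e = 0"
    using degree_diff_less_or_eq[of d j "smult (lead_coeff d) (Q j)"] Qj(1,2)
    by (simp add: e_def j_def)
  then have "ip (Q j) e = 0"
    using MOPS_orthogonal[OF Q] by auto
  moreover have "ip (Q j) d = 0"
    using orth[of "Q j"] deg Qj(1) commute by (simp add: j_def)
  moreover have "d = smult (lead_coeff d) (Q j) + e"
    by (simp add: e_def)
  ultimately have "lead_coeff d * ip (Q j) (Q j) = 0"
    by (metis add_right smult_right add_0_right)
  with \<open>d \<noteq> 0\<close> Qj(3) show False
    by simp
qed

lemma MOPS_eqI:
  assumes Q: "is_MOPS ip Q" and deg: "degree p = m" and lc: "lead_coeff p = 1"
    and orth: "\<And>q. degree q < m \<Longrightarrow> ip p q = 0"
  shows "p = Q m"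
proof -
  note Qm = MOPS_degree[OF Q, of m] MOPS_lead_coeff[OF Q, of m]
  have "degree (p - Q m) < m \<or> p - Q m = 0"
    using degree_diff_less_or_eq[of p m "Q m"] deg lc Qm by simp
  moreover have "ip (p - Q m) q = 0" if "degree q < m" for q
    using that orth MOPS_orthogonal[OF Q] by (simp add: diff_left)
  ultimately show ?thesis
    using eq_0_if_orthogonal_below[OF Q, of "p - Q m" m] by auto
qed

lemma orthogonal_below_if_shifted:
  assumes shift: "\<And>q. ip f ([:-c, 1:] * q) = ipm f q"
    and below: "\<And>q. degree q < m - 1 \<Longrightarrow> ipm f q = 0"
    and one: "ip f 1 = 0" and "degree q < m"
  shows "ip f q = 0"
proof (cases "degree q = 0")
  case True
  then have "q = smult (coeff q 0) 1"
    using degree_0_id[of q] by simp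
  then show ?thesis
    using one smult_right[of f "coeff q 0" 1] by simp
next
  case False
  define s where "s = synthetic_div q c"
  have "q = [:-c, 1:] * s + smult (poly q c) 1"
    using synthetic_div_correct'[of c q] by (simp add: s_def)
  then have "ip f q = ip f ([:-c, 1:] * s) + poly q c * ip f 1"
    by (metis add_right smult_right)
  also have "\<dots> = ipm f s"
    by (simp only: shift one mult_zero_right add_0_right)
  also have "\<dots> = 0"
    using False \<open>degree q < m\<close> below by (simp add: s_def degree_synthetic_div)
  finally show ?thesis .
qed

end

lemma sym_bilinear_poly_add_point_mass:
  assumes "sym_bilinear_poly ip"
  shows "sym_bilinear_poly (\<lambda>f g. ip f g + N * poly f c * poly g c)"
proof -
  interpret sym_bilinear_poly ip
    by fact
  show ?thesis
  proof
    fix p q r :: "real poly" and a :: real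
    show "ip (p + q) r + N * poly (p + q) c * poly r c
        = ip p r + N * poly p c * poly r c + (ip q r + N * poly q c * poly r c)"
      by (simp add: add_left distrib_left distrib_right)
    show "ip (smult a p) r + N * poly (smult a p) c * poly r c = a * (ip p r + N * poly p c * poly r c)"
      by (simp add: smult_left distrib_left)
    show "ip p q + N * poly p c * poly q c = ip q p + N * poly q c * poly p c"
      by (simp add: commute)
  qed
qed

locale measure_moments =
  fixes \<mu> :: "real measure" and c :: real
  assumes sets_borel: "sets \<mu> = sets borel"
    and moments: "\<forall>k::nat. integrable \<mu> (\<lambda>x. x ^ k)"
    and c_outside: "c \<notin> mu_support \<mu>"
begin

lemma borel_measurable_poly: "(\<lambda>x. poly p x) \<in> borel_measurable \<mu>"
  unfolding measurable_cong_sets[OF sets_borel refl]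
  by (intro borel_measurable_continuous_onI) (auto intro: continuous_intros)

lemma borel_measurable_poly_div: "(\<lambda>x. poly p x * (1 / (x - c))) \<in> borel_measurable \<mu>"
  using borel_measurable_poly
  by (intro borel_measurable_times) (simp_all add: measurable_cong_sets[OF sets_borel refl])

lemma integrable_poly: "integrable \<mu> (\<lambda>x. poly p x)"
  using moments unfolding poly_altdef by (intro Bochner_Integration.integrable_sum) auto

lemma AE_away_from_c: obtains e where "e > 0" and "AE x in \<mu>. e \<le> \<bar>x - c\<bar>"
proof -
  obtain e where "e > 0" and "emeasure \<mu> (ball c e) = 0"
    using c_outside unfolding mu_support_def by (auto simp: not_gr_zero)
  moreover have "ball c e \<in> sets \<mu>"
    using sets_borel by simp
  ultimately have "ball c e \<in> null_sets \<mu>"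
    by (simp add: null_sets_def)
  then have "AE x in \<mu>. e \<le> \<bar>x - c\<bar>"
    by (rule AE_I') (auto simp: dist_real_def)
  with \<open>e > 0\<close> show ?thesis
    by (rule that)
qed

lemma integrable_poly_div: "integrable \<mu> (\<lambda>x. poly p x * (1 / (x - c)))"
proof -
  obtain e where e: "e > 0" "AE x in \<mu>. e \<le> \<bar>x - c\<bar>"
    using AE_away_from_c by blast
  show ?thesis
  proof (rule Bochner_Integration.integrable_bound[of _ "\<lambda>x. poly p x / e"])
    show "integrable \<mu> (\<lambda>x. poly p x / e)"
      using integrable_poly by simp
    show "(\<lambda>x. poly p x * (1 / (x - c))) \<in> borel_measurable \<mu>"
      by (rule borel_measurable_poly_div)
    show "AE x in \<mu>. norm (poly p x * (1 / (x - c))) \<le> norm (poly p x / e)"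
      using e(2)
    proof eventually_elim
      case (elim x)
      then have "1 / \<bar>x - c\<bar> \<le> 1 / e"
        using e(1) by (simp add: frac_le)
      then show ?case
        using e(1) by (auto simp: abs_mult divide_inverse intro!: mult_left_mono)
    qed
  qed
qed

lemma sym_bilinear_ip_mu: "sym_bilinear_poly (ip_mu \<mu>)"
proof
  fix p q r :: "real poly" and a :: real
  show "ip_mu \<mu> (p + q) r = ip_mu \<mu> p r + ip_mu \<mu> q r"
    using integrable_poly[of "p * r"] integrable_poly[of "q * r"]
    by (simp add: ip_mu_def distrib_right)
  show "ip_mu \<mu> (smult a p) r = a * ip_mu \<mu> p r"
    by (simp add: ip_mu_def mult.assoc)
  show "ip_mu \<mu> p q = ip_mu \<mu> q p"
    by (simp add: ip_mu_def mult.commute)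
qed

lemma sym_bilinear_ip_nu: "sym_bilinear_poly (ip_nu \<mu> c)"
proof
  fix p q r :: "real poly" and a :: real
  show "ip_nu \<mu> c (p + q) r = ip_nu \<mu> c p r + ip_nu \<mu> c q r"
    using integrable_poly_div[of "p * r"] integrable_poly_div[of "q * r"]
    by (simp add: ip_nu_def distrib_right add_divide_distrib)
  show "ip_nu \<mu> c (smult a p) r = a * ip_nu \<mu> c p r"
    unfolding ip_nu_def by (simp only: poly_smult mult.assoc integral_mult_right_zero)
  show "ip_nu \<mu> c p q = ip_nu \<mu> c q p"
    by (simp add: ip_nu_def mult.commute)
qed

lemma sym_bilinear_ip_nuN: "sym_bilinear_poly (ip_nuN \<mu> c N)"
  using sym_bilinear_poly_add_point_mass[OF sym_bilinear_ip_nu, of N c]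
  by (simp add: ip_nuN_def[abs_def])

lemma ip_nu_shift: "ip_nu \<mu> c f ([:-c, 1:] * q) = ip_mu \<mu> f q"
proof -
  obtain e where "e > 0" and far: "AE x in \<mu>. e \<le> \<bar>x - c\<bar>"
    using AE_away_from_c by blast
  from far have "AE x in \<mu>. poly f x * poly ([:-c, 1:] * q) x * (1 / (x - c)) = poly f x * poly q x"
  proof eventually_elim
    case (elim x)
    then have "x - c \<noteq> 0"
      using \<open>e > 0\<close> by auto
    then show ?case
      by (simp add: field_simps)
  qed
  then show ?thesis
    unfolding ip_nu_def ip_mu_def
    by (rule integral_cong_AE[rotated 2])
      (use borel_measurable_poly_div[of "f * ([:-c, 1:] * q)"] borel_measurable_poly[of "f * q"] in simp_all)
qed

lemma ip_nuN_shift: "ip_nuN \<mu> c N f ([:-c, 1:] * q) = ip_mu \<mu> f q"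
  unfolding ip_nuN_def ip_nu_shift by simp

lemma ip_mu_mult_x: "ip_mu \<mu> ([:0, 1:] * f) g = ip_mu \<mu> f ([:0, 1:] * g)"
  by (simp add: ip_mu_def mult_ac)

lemma Fn_eq_ip_nu: "Fn \<mu> P m c = ip_nu \<mu> c (P m) 1"
  by (simp add: Fn_def ip_nu_def)

end

text \<open>\<open>ipm\<close>, \<open>ipn\<close> abstract \<open>\<langle>_,_\<rangle>\<^sub>\<mu>\<close> and \<open>\<langle>_,_\<rangle>\<^sub>\<nu>\<close>; \<open>ipn (P m) 1\<close> is the paper's \<open>F\<^sub>m(c)\<close>.\<close>

locale mops_recurrence =
  mu: sym_bilinear_poly ipm + nu: sym_bilinear_poly ipn
  for ipm ipn :: "real poly \<Rightarrow> real poly \<Rightarrow> real" +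
  fixes c :: real and P :: "nat \<Rightarrow> real poly" and bet gam :: "nat \<Rightarrow> real"
  assumes shift: "ipn f ([:-c, 1:] * q) = ipm f q"
    and mult_x: "ipm ([:0, 1:] * f) g = ipm f ([:0, 1:] * g)"
    and P_MOPS: "is_MOPS ipm P"
    and three_term_0: "[:0, 1:] * P 0 = P 1 + smult (bet 0) (P 0)"
    and three_term: "m \<ge> 1 \<Longrightarrow> [:0, 1:] * P m = P (Suc m) + smult (bet m) (P m) + smult (gam m) (P (m - 1))"
begin

lemma P_0: "P 0 = 1"
  using degree_0_id[of "P 0"] MOPS_degree[OF P_MOPS, of 0] MOPS_lead_coeff[OF P_MOPS, of 0]
  by (simp add: one_pCons)

lemma P_orthogonal: "degree q < m \<Longrightarrow> ipm (P m) q = 0"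
  by (rule mu.MOPS_orthogonal[OF P_MOPS])

lemma norm_recurrence:
  assumes "k \<ge> 1"
  shows "ipm (P k) (P k) = gam k * ipm (P (k - 1)) (P (k - 1))"
proof -
  obtain j where k: "k = Suc j"
    using assms by (cases k) auto
  have "degree ([:0, 1:] * P j - P k) < k \<or> [:0, 1:] * P j = P k"
    using MOPS_degree[OF P_MOPS] MOPS_lead_coeff[OF P_MOPS]
    by (intro degree_diff_less_or_eq) (auto simp: k degree_pCons_le)
  then have "ipm (P k) ([:0, 1:] * P j) = ipm (P k) (P k)"
    using P_orthogonal mu.add_right[of "P k" "[:0, 1:] * P j - P k" "P k"] by auto
  moreover have "ipm ([:0, 1:] * P k) (P j) = gam k * ipm (P j) (P j)"
    using P_orthogonal[of "P j"] MOPS_degree[OF P_MOPS]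
    by (simp add: three_term k mu.add_left mu.smult_left del: mult_pCons_left)
  ultimately show ?thesis
    using mult_x[of "P k" "P j"] by (simp add: k)
qed

lemma gam_nonzero: "k \<ge> 1 \<Longrightarrow> gam k \<noteq> 0"
  using norm_recurrence MOPS_norm_nonzero[OF P_MOPS] by fastforce

lemma second_kind_recurrence:
  assumes "m \<ge> 1"
  shows "ipn (P (Suc m)) 1 = (c - bet m) * ipn (P m) 1 - gam m * ipn (P (m - 1)) 1"
proof -
  have "ipn ([:-c, 1:] * P m) 1 = 0"
    using assms P_orthogonal[of 1 m] shift[of 1 "P m"] by (simp add: nu.commute mu.commute)
  then have "ipn ([:0, 1:] * P m) 1 = c * ipn (P m) 1"
    using nu.add_left[of "[:-c, 1:] * P m" "smult c (P m)" 1] nu.smult_left[of c "P m" 1]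
    by (simp add: algebra_simps)
  moreover have "ipn ([:0, 1:] * P m) 1
      = ipn (P (Suc m)) 1 + bet m * ipn (P m) 1 + gam m * ipn (P (m - 1)) 1"
    by (simp only: three_term[OF assms] nu.add_left nu.smult_left)
  ultimately show ?thesis
    by (simp add: algebra_simps)
qed

lemma P_at_c_recurrence:
  assumes "m \<ge> 1"
  shows "poly (P (Suc m)) c = (c - bet m) * poly (P m) c - gam m * poly (P (m - 1)) c"
  using arg_cong[OF three_term[OF assms], of "\<lambda>p. poly p c"] by (simp add: algebra_simps)

lemma second_kind_wronskian:
  "ipn (P (Suc m)) 1 * poly (P m) c - ipn (P m) 1 * poly (P (Suc m)) c = ipm (P m) (P m)"
proof (induction m)
  case 0
  have P_1: "P 1 = [:-c, 1:] * 1 + smult (c - bet 0) 1"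
    using three_term_0 by (simp add: P_0 algebra_simps)
  have F_1: "ipn (P 1) 1 = ipm 1 1 + (c - bet 0) * ipn 1 1"
    unfolding P_1 using shift[of 1 1] nu.commute[of 1 "[:-c, 1:]"]
    by (simp only: nu.add_left nu.smult_left mult_1_right)
  have P_1_at_c: "poly (P 1) c = c - bet 0"
    unfolding P_1 by simp
  show ?case
    unfolding One_nat_def[symmetric] F_1 P_1_at_c P_0 by (simp add: algebra_simps)
next
  case (Suc m)
  have "ipn (P (Suc (Suc m))) 1 * poly (P (Suc m)) c - ipn (P (Suc m)) 1 * poly (P (Suc (Suc m))) c
      = gam (Suc m) * (ipn (P (Suc m)) 1 * poly (P m) c - ipn (P m) 1 * poly (P (Suc m)) c)"
    unfolding second_kind_recurrence[of "Suc m", simplified] P_at_c_recurrence[of "Suc m", simplified]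
    by (simp add: algebra_simps)
  also have "\<dots> = ipm (P (Suc m)) (P (Suc m))"
    using Suc norm_recurrence[of "Suc m"] by simp
  finally show ?case .
qed

lemma MOPS_eq_quasi_orthogonal:
  assumes "sym_bilinear_poly ip" and ip_shift: "\<And>f q. ip f ([:-c, 1:] * q) = ipm f q"
    and Q: "is_MOPS ip Q" and "m \<ge> 1" and at_1: "ip (P m + smult t (P (m - 1))) 1 = 0"
  shows "Q m = P m + smult t (P (m - 1))"
proof -
  interpret ip: sym_bilinear_poly ip
    by fact
  have "degree (smult t (P (m - 1))) < degree (P m)"
    using \<open>m \<ge> 1\<close> degree_smult_le[of t "P (m - 1)"] MOPS_degree[OF P_MOPS] by (simp add: le_less_trans)
  then have deg: "degree (P m + smult t (P (m - 1))) = m"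
    by (simp add: degree_add_eq_left MOPS_degree[OF P_MOPS])
  have lc: "lead_coeff (P m + smult t (P (m - 1))) = 1"
    unfolding deg using \<open>m \<ge> 1\<close> MOPS_degree[OF P_MOPS] MOPS_lead_coeff[OF P_MOPS]
    by (simp add: coeff_eq_0)
  have below: "ipm (P m + smult t (P (m - 1))) q = 0" if "degree q < m - 1" for q
    using that P_orthogonal by (simp add: mu.add_left mu.smult_left)
  have "ip (P m + smult t (P (m - 1))) q = 0" if "degree q < m" for q
    using ip.orthogonal_below_if_shifted[of "P m + smult t (P (m - 1))" c ipm m q] ip_shift below at_1 that
    by blast
  then show ?thesis
    by (metis ip.MOPS_eqI[OF Q deg lc])
qed

lemma MOPS_shifted_eq:
  assumes Q: "is_MOPS ipn Q" and "m \<ge> 1" and "ipn (P (m - 1)) 1 \<noteq> 0"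
  shows "Q m = P m + smult (- ipn (P m) 1 / ipn (P (m - 1)) 1) (P (m - 1))"
  using assms
  by (intro MOPS_eq_quasi_orthogonal[OF nu.sym_bilinear_poly_axioms shift Q]) (simp_all add: nu.diff_left nu.smult_left)

lemma MOPS_shifted_at_c:
  assumes Q: "is_MOPS ipn Q" and "m \<ge> 1" and "ipn (P (m - 1)) 1 \<noteq> 0"
  shows "poly (Q m) c = - ipm (P (m - 1)) (P (m - 1)) / ipn (P (m - 1)) 1"
  using second_kind_wronskian[of "m - 1"] assms
  by (simp add: MOPS_shifted_eq[OF assms] field_simps)

end

context measure_moments
begin

lemma mops_recurrence_measure:
  assumes "is_MOPS (ip_mu \<mu>) P"
    and "[:0, 1:] * P 0 = P 1 + smult (bet 0) (P 0)"
    and "\<forall>m\<ge>1. [:0, 1:] * P m = P (Suc m) + smult (bet m) (P m) + smult (gam m) (P (m - 1))"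
  shows "mops_recurrence (ip_mu \<mu>) (ip_nu \<mu> c) c P bet gam"
  using assms sym_bilinear_ip_mu sym_bilinear_ip_nu ip_nu_shift ip_mu_mult_x
  by (simp add: mops_recurrence_def mops_recurrence_axioms_def)

lemma MOPS_point_mass_eq:
  assumes P: "is_MOPS (ip_mu \<mu>) P"
    and "[:0, 1:] * P 0 = P 1 + smult (bet 0) (P 0)"
    and "\<forall>m\<ge>1. [:0, 1:] * P m = P (Suc m) + smult (bet m) (P m) + smult (gam m) (P (m - 1))"
    and Qc: "is_MOPS (ip_nu \<mu> c) Qc" and QcN: "is_MOPS (ip_nuN \<mu> c N) QcN"
    and m: "m \<ge> 1" and P_at_c: "poly (P (m - 1)) c \<noteq> 0" and F: "Fn \<mu> P (m - 1) c \<noteq> 0"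
    and B: "1 + N * Bc \<mu> P Qc c m \<noteq> 0"
  shows "QcN m = P m + smult (LambdaC \<mu> P Qc c N m) (P (m - 1))"
proof -
  interpret mops_recurrence "ip_mu \<mu>" "ip_nu \<mu> c" c P bet gam
    using mops_recurrence_measure assms by blast
  have Bc: "Bc \<mu> P Qc c m = poly (P (m - 1)) c / Fn \<mu> P (m - 1) c"
    using MOPS_shifted_at_c[OF Qc m] F MOPS_norm_nonzero[OF P, of "m - 1"]
    by (simp add: Bc_def Fn_eq_ip_nu)
  then have den: "Fn \<mu> P (m - 1) c + N * poly (P (m - 1)) c \<noteq> 0"
    using B F by (auto simp: field_simps)
  have "LambdaC \<mu> P Qc c N m
      = - (Fn \<mu> P m c + N * poly (P m) c) / (Fn \<mu> P (m - 1) c + N * poly (P (m - 1)) c)"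
    using P_at_c F den by (simp add: LambdaC_def Let_def Bc field_simps)
  then have "ip_nuN \<mu> c N (P m + smult (LambdaC \<mu> P Qc c N m) (P (m - 1))) 1 = 0"
    using den sym_bilinear_poly.add_left[OF sym_bilinear_ip_nu] sym_bilinear_poly.smult_left[OF sym_bilinear_ip_nu]
    by (simp add: ip_nuN_def Fn_eq_ip_nu field_simps)
  then show ?thesis
    by (rule MOPS_eq_quasi_orthogonal[OF sym_bilinear_ip_nuN ip_nuN_shift QcN m])
qed

end

lemma poly_Delta: "poly (Delta L bet gam n) x = B2 L bet gam n x + L n * L (n - 1) / gam (n - 1)"
  by (simp add: Delta_def B2_def algebra_simps diff_divide_distrib)

lemma degree_Delta:
  assumes "gam (n - 1) \<noteq> 0" and "L (n - 1) \<noteq> 0"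
  shows "degree (Delta L bet gam n) = 1"
proof -
  have "Delta L bet gam n = [:1 - L (n - 1) * bet (n - 1) / gam (n - 1) + L n * L (n - 1) / gam (n - 1),
      L (n - 1) / gam (n - 1):]"
    using assms by (simp add: Delta_def field_simps)
  then show ?thesis
    using assms by simp
qed

text \<open>\<open>A + L B\<close> and \<open>-(L1/g) A + b2 B\<close> are \<open>Q\<^sub>n\<close> and \<open>Q\<^sub>n\<^sub>-\<^sub>1\<close> in the basis \<open>A = P\<^sub>n\<close>, \<open>B = P\<^sub>n\<^sub>-\<^sub>1\<close>;
  the change of basis has determinant \<open>\<Delta>\<close>.\<close>

lemma linear_combination_change_of_basis:
  fixes A B C D b2 L L1 g \<Delta> :: real
  assumes "\<Delta> = b2 + L * L1 / g" and "\<Delta> \<noteq> 0" and g: "g \<noteq> 0"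
  shows "C * A + D * B = ((C * b2 * g + D * L1) / (\<Delta> * g)) * (A + L * B)
           + ((D - C * L) / \<Delta>) * (- (L1 / g) * A + b2 * B)"
proof -
  define E where "E = b2 * g + L * L1"
  have \<Delta>g: "\<Delta> * g = E"
    using assms by (simp add: E_def field_simps)
  then have "E \<noteq> 0"
    using assms by auto
  have \<eta>: "(D - C * L) / \<Delta> = (D - C * L) * g / E"
    using \<Delta>g \<open>\<Delta> \<noteq> 0\<close> g by (auto simp: field_simps)
  have "((C * b2 * g + D * L1) / (\<Delta> * g)) * (A + L * B) + ((D - C * L) / \<Delta>) * (- (L1 / g) * A + b2 * B)
      = ((C * b2 * g + D * L1) * (A + L * B) + (D - C * L) * g * (- (L1 / g) * A + b2 * B)) / E"
    unfolding \<Delta>g \<eta> by (simp only: times_divide_eq_left flip: add_divide_distrib)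
  also have "(C * b2 * g + D * L1) * (A + L * B) + (D - C * L) * g * (- (L1 / g) * A + b2 * B)
      = (C * A + D * B) * E"
    using g by (simp add: E_def field_simps)
  finally show ?thesis
    using \<open>E \<noteq> 0\<close> by simp
qed

lemma eliminate_via_three_term:
  fixes A B C x bt g L1 :: real
  assumes "x * B = A + bt * B + g * C" and "g \<noteq> 0" and "L1 \<noteq> 0"
  shows "B + L1 * C = - (L1 / g) * A + L1 * (1 / L1 + (x - bt) / g) * B"
proof -
  have C: "C = (x * B - A - bt * B) / g"
    using assms by (simp add: field_simps)
  show ?thesis
    unfolding C using assms(2,3) by (simp add: field_simps)
qed

lemma derivative_coordinates:
  fixes A B C A' B' x bt g s an bn am bm L :: real
  assumes "x * B = A + bt * B + g * C" and "s * A' = an * A + bn * B" and "s * B' = am * B + bm * C"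
    and "g \<noteq> 0" and "s \<noteq> 0" and "bm \<noteq> 0"
  shows "A' + L * B' = ((1 / s) * (an - L * bm / g)) * A
     + ((1 / s) * (bn + L * bm * (am / bm + (x - bt) / g))) * B"
proof -
  have C: "C = (x * B - A - bt * B) / g"
    and A': "A' = (an * A + bn * B) / s" and B': "B' = (am * B + bm * C) / s"
    using assms by (simp_all add: field_simps)
  show ?thesis
    unfolding A' B' C using assms(4-6) by (simp add: field_simps)
qed

lemma derivative_coordinates_previous:
  fixes A B C A' B' C' x bt g s an bn am bm L1 :: real
  assumes "x * B = A + bt * B + g * C" and "s * A' = an * A + bn * B" and "s * B' = am * B + bm * C"
    and "B + x * B' = A' + bt * B' + g * C'"
    and "g \<noteq> 0" and "s \<noteq> 0" and "bm \<noteq> 0" and "L1 \<noteq> 0"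
  shows "B' + L1 * C' = ((- L1 / s) * (an / g + bm / g * (1 / L1 + (x - bt) / g))) * A
     + ((L1 / s) * ((s - bn) / g + bm * (am / bm + (x - bt) / g) * (1 / L1 + (x - bt) / g))) * B"
proof -
  have C: "C = (x * B - A - bt * B) / g" and C': "C' = (B + x * B' - A' - bt * B') / g"
    and A': "A' = (an * A + bn * B) / s" and B': "B' = (am * B + bm * C) / s"
    using assms by (simp_all add: field_simps)
  show ?thesis
    unfolding C' unfolding A' B' C using assms(5-8) by (simp add: field_simps)
qed

lemma ladder_relations:
  fixes P Q a b :: "nat \<Rightarrow> real poly" and sig :: "real poly" and L bet gam :: "nat \<Rightarrow> real"
  assumes three_term:
      "[:0, 1:] * P (n - 1) = P n + smult (bet (n - 1)) (P (n - 1)) + smult (gam (n - 1)) (P (n - 2))"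
    and structure_n: "sig * pderiv (P n) = a n * P n + b n * P (n - 1)"
    and structure_prev: "sig * pderiv (P (n - 1)) = a (n - 1) * P (n - 1) + b (n - 1) * P (n - 2)"
    and Q_n: "Q n = P n + smult (L n) (P (n - 1))"
    and Q_prev: "Q (n - 1) = P (n - 1) + smult (L (n - 1)) (P (n - 2))"
    and gam: "gam (n - 1) \<noteq> 0" and L: "L (n - 1) \<noteq> 0"
    and sig: "poly sig x \<noteq> 0" and b: "poly (b (n - 1)) x \<noteq> 0"
    and Delta: "poly (Delta L bet gam n) x \<noteq> 0"
  shows "- xi_c (C1 sig a b L bet gam n) (D1 sig a b L bet gam n) L bet gam n x * poly (Q n) x
         + poly (pderiv (Q n)) x
       = eta_c (C1 sig a b L bet gam n) (D1 sig a b L bet gam n) L bet gam n x * poly (Q (n - 1)) x"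
    and "- eta_c (C2 sig a b L bet gam n) (D2 sig a b L bet gam n) L bet gam n x * poly (Q (n - 1)) x
         + poly (pderiv (Q (n - 1))) x
       = xi_c (C2 sig a b L bet gam n) (D2 sig a b L bet gam n) L bet gam n x * poly (Q n) x"
proof -
  define A B C where "A = poly (P n) x" and "B = poly (P (n - 1)) x" and "C = poly (P (n - 2)) x"
  define A' B' C' where "A' = poly (pderiv (P n)) x" and "B' = poly (pderiv (P (n - 1))) x"
    and "C' = poly (pderiv (P (n - 2))) x"
  have rec: "x * B = A + bet (n - 1) * B + gam (n - 1) * C"
    using arg_cong[OF three_term, of "\<lambda>p. poly p x"] by (simp add: A_def B_def C_def)
  have rec': "B + x * B' = A' + bet (n - 1) * B' + gam (n - 1) * C'"
    using arg_cong[OF arg_cong[OF three_term, of pderiv], of "\<lambda>p. poly p x"]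
    by (simp add: B_def A'_def B'_def C'_def pderiv_add pderiv_smult pderiv_mult pderiv_pCons algebra_simps)
  have str: "poly sig x * A' = poly (a n) x * A + poly (b n) x * B"
    using arg_cong[OF structure_n, of "\<lambda>p. poly p x"] by (simp add: A_def B_def A'_def)
  have str': "poly sig x * B' = poly (a (n - 1)) x * B + poly (b (n - 1)) x * C"
    using arg_cong[OF structure_prev, of "\<lambda>p. poly p x"] by (simp add: B_def C_def B'_def)
  have Q_n_at: "poly (Q n) x = A + L n * B"
    by (simp add: Q_n A_def B_def)
  have Q_prev_at: "poly (Q (n - 1)) x = - (L (n - 1) / gam (n - 1)) * A + B2 L bet gam n x * B"
    unfolding B2_def Q_prev using eliminate_via_three_term[OF rec gam L] by (simp add: B_def C_def)
  have dQ_n: "poly (pderiv (Q n)) x = C1 sig a b L bet gam n x * A + D1 sig a b L bet gam n x * B"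
    unfolding C1_def D1_def Q_n using derivative_coordinates[OF rec str str' gam sig b] by (simp add: A'_def B'_def pderiv_add pderiv_smult)
  have dQ_prev: "poly (pderiv (Q (n - 1))) x = C2 sig a b L bet gam n x * A + D2 sig a b L bet gam n x * B"
    unfolding C2_def D2_def Q_prev using derivative_coordinates_previous[OF rec str str' rec' gam sig b L]
    by (simp add: B'_def C'_def pderiv_add pderiv_smult)
  note change = linear_combination_change_of_basis[OF poly_Delta Delta gam]
  show "- xi_c (C1 sig a b L bet gam n) (D1 sig a b L bet gam n) L bet gam n x * poly (Q n) x
         + poly (pderiv (Q n)) x
       = eta_c (C1 sig a b L bet gam n) (D1 sig a b L bet gam n) L bet gam n x * poly (Q (n - 1)) x"
    unfolding xi_c_def eta_c_def Q_n_at Q_prev_at dQ_n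
    using change[of "C1 sig a b L bet gam n x" A "D1 sig a b L bet gam n x" B] by linarith
  show "- eta_c (C2 sig a b L bet gam n) (D2 sig a b L bet gam n) L bet gam n x * poly (Q (n - 1)) x
         + poly (pderiv (Q (n - 1))) x
       = xi_c (C2 sig a b L bet gam n) (D2 sig a b L bet gam n) L bet gam n x * poly (Q n) x"
    unfolding xi_c_def eta_c_def Q_n_at Q_prev_at dQ_prev
    using change[of "C2 sig a b L bet gam n x" A "D2 sig a b L bet gam n x" B] by linarith
qed

theorem theorem4:
  fixes \<mu> :: "real measure" and c N :: real
    and P Qc QcN :: "nat \<Rightarrow> real poly" and bet gam :: "nat \<Rightarrow> real"
    and sig :: "real poly" and a b :: "nat \<Rightarrow> real poly" and n :: nat
  defines "L \<equiv> LambdaC \<mu> P Qc c N"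
  assumes borel: "sets \<mu> = sets borel"
    and ac: "absolutely_continuous lborel \<mu>"
    and moments: "\<forall>k::nat. integrable \<mu> (\<lambda>x. x ^ k)"
    and supp_inf: "infinite (mu_support \<mu>)"
    and c_out: "c \<notin> mu_support \<mu>"
    and N_pos: "N > 0"
    and P_MOPS: "is_MOPS (ip_mu \<mu>) P"
    and Qc_MOPS: "is_MOPS (ip_nu \<mu> c) Qc"
    and QcN_MOPS: "is_MOPS (ip_nuN \<mu> c N) QcN"
    and rec0: "[:0, 1:] * P 0 = P 1 + smult (bet 0) (P 0)"
    and rec: "\<forall>m\<ge>1. [:0, 1:] * P m = P (Suc m) + smult (bet m) (P m) + smult (gam m) (P (m - 1))"
    and sig_nz: "sig \<noteq> 0"
    and struct: "\<forall>m\<ge>1. sig * pderiv (P m) = a m * P m + b m * P (m - 1)"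
    and deg_const: "\<exists>da db. \<forall>m\<ge>1. degree (a m) = da \<and> degree (b m) = db"
    and n_ge: "n \<ge> 2"
    and def1: "poly (P (n - 1)) c \<noteq> 0" and def2: "poly (P (n - 2)) c \<noteq> 0"
    and def3: "Fn \<mu> P (n - 1) c \<noteq> 0" and def4: "Fn \<mu> P (n - 2) c \<noteq> 0"
    and def5: "1 + N * Bc \<mu> P Qc c n \<noteq> 0" and def6: "1 + N * Bc \<mu> P Qc c (n - 1) \<noteq> 0"
    and def7: "L (n - 1) \<noteq> 0"
  shows "degree (Delta L bet gam n) = 1 \<and>
    (\<forall>x. poly sig x \<noteq> 0 \<and> poly (b (n - 1)) x \<noteq> 0 \<and> poly (Delta L bet gam n) x \<noteq> 0 \<longrightarrow>
       - xi_c (C1 sig a b L bet gam n) (D1 sig a b L bet gam n) L bet gam n x * poly (QcN n) x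
         + poly (pderiv (QcN n)) x
       = eta_c (C1 sig a b L bet gam n) (D1 sig a b L bet gam n) L bet gam n x * poly (QcN (n - 1)) x
     \<and>
       - eta_c (C2 sig a b L bet gam n) (D2 sig a b L bet gam n) L bet gam n x * poly (QcN (n - 1)) x
         + poly (pderiv (QcN (n - 1))) x
       = xi_c (C2 sig a b L bet gam n) (D2 sig a b L bet gam n) L bet gam n x * poly (QcN n) x)"
proof -
  interpret measure_moments \<mu> c
    using borel moments c_out by unfold_locales
  interpret mops_recurrence "ip_mu \<mu>" "ip_nu \<mu> c" c P bet gam
    using mops_recurrence_measure[OF P_MOPS rec0 rec] .
  have n: "n - 1 \<ge> 1" "Suc (n - 1) = n" "n - 1 - 1 = n - 2"
    using n_ge by auto
  have gam: "gam (n - 1) \<noteq> 0"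
    using gam_nonzero n(1) .
  have Q_n: "QcN n = P n + smult (L n) (P (n - 1))"
    unfolding L_def using n_ge def1 def3 def5
    by (intro MOPS_point_mass_eq[OF P_MOPS rec0 rec Qc_MOPS QcN_MOPS]) auto
  have Q_prev: "QcN (n - 1) = P (n - 1) + smult (L (n - 1)) (P (n - 2))"
    unfolding L_def using MOPS_point_mass_eq[OF P_MOPS rec0 rec Qc_MOPS QcN_MOPS n(1)] n def2 def4 def6
    by simp
  have rec_prev:
    "[:0, 1:] * P (n - 1) = P n + smult (bet (n - 1)) (P (n - 1)) + smult (gam (n - 1)) (P (n - 2))"
    using three_term[OF n(1)] n by simp
  have struct_n: "sig * pderiv (P n) = a n * P n + b n * P (n - 1)"
    using struct n_ge by simp
  have struct_prev: "sig * pderiv (P (n - 1)) = a (n - 1) * P (n - 1) + b (n - 1) * P (n - 2)"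
    using struct n by metis
  show ?thesis
    using degree_Delta[of gam n L bet, OF gam def7]
      ladder_relations[where P = P and Q = QcN and n = n and L = L and bet = bet and gam = gam and sig = sig
        and a = a and b = b,
        OF rec_prev struct_n struct_prev Q_n Q_prev gam def7]
    by blast
qed

end
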